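(* For $\alpha\in\mathbb{S}_m$ and $\beta\in\mathbb{S}_{m'}$ let $\alpha\#\beta\in\mathbb{S}_{m+m'}$ be the concatenation ($\alpha$ acting on $\{1,\dots,m\}$ and $\beta$ shifted to act on $\{m+1,\dots,m+m'\}$). Then the class of $\alpha\#\beta$ in $\mathcal{H}_{m+m'}$ depends only on the classes of $\alpha$ in $\mathcal{H}_m$ and $\beta$ in $\mathcal{H}_{m'}$; in particular it does not depend on the choice of hyper arc diagrams (cyclic shifts $\sigma_m^{-k}\alpha\sigma_m^k$, $\sigma_{m'}^{-l}\beta\sigma_{m'}^l$) representing the hyper chord diagrams. Hence concatenation induces a well-defined bilinear product $\mathcal{H}_m\otimes\mathcal{H}_{m'}\to\mathcal{H}_{m+m'}$.
   Context: $\sigma_m=(1,\dots,m)$. $\mathcal{H}_m=\mathbb{C}[\mathbb{S}_m]/\mathcal{V}_m$, where $\mathcal{V}_m$ is the span of all generalized Vassiliev elements in $\mathbb{C}[\mathbb{S}_m]$ ($\mathcal{H}_0=\mathcal{H}_1=\mathbb{C}$). Generalized Vassiliev elements: let $m\ge2$, $\gamma\in\mathbb{S}_{m-1}$, $q\in[m-1]\cup\{*\}$. For $t\in\{0,\dots,m-1\}$ let $\alpha_t\in\mathbb{S}_m$ be obtained by inserting a new point $x$ (free leg) into the line $1<\dots<m-1$ in the gap between $t$ and $t+1$, relabeling all points $1,\dots,m$ in order, letting the permutation act as $\gamma$ on old points except $q\mapsto x\mapsto\gamma(q)$ if $q\ne*$, and $x$ fixed if $q=*$. For a cycle $v$ of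 $\gamma$, $E(\gamma,q,v)=\sum_{j\in v}(\alpha_{j-1}-\alpha_j)$. *)

theory Defs
  imports Complex_Main "HOL-Combinatorics.Permutations"
begin

text \<open>Permutations in S_m are functions nat => nat permuting {1..m} (identity elsewhere).
  Elements of the group algebra C[S_m] are functions (nat => nat) => complex
  supported on S_m (finitely supported automatically).\<close>

definition galg :: "nat \<Rightarrow> ((nat \<Rightarrow> nat) \<Rightarrow> complex) set" where
  "galg m = {a. \<forall>\<pi>. a \<pi> \<noteq> 0 \<longrightarrow> \<pi> permutes {1..m}}"

definition delta :: "(nat \<Rightarrow> nat) \<Rightarrow> (nat \<Rightarrow> nat) \<Rightarrow> complex" where
  "delta \<alpha> = (\<lambda>\<pi>. if \<pi> = \<alpha> then 1 else 0)"

text \<open>Insertion of the free leg x into the gap between t and t+1 (x gets label t+1).\<close>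
definition ins_lbl :: "nat \<Rightarrow> nat \<Rightarrow> nat" where
  "ins_lbl t i = (if i \<le> t then i else i + 1)"

text \<open>alpha_t for gamma in S_(m-1), q in [m-1] (Some q) or * (None).\<close>
definition vas_alpha :: "nat \<Rightarrow> (nat \<Rightarrow> nat) \<Rightarrow> nat option \<Rightarrow> nat \<Rightarrow> nat \<Rightarrow> nat" where
  "vas_alpha m \<gamma> q t p =
     (if p < 1 \<or> m < p then p
      else if p = t + 1 then
        (case q of None \<Rightarrow> t + 1 | Some q' \<Rightarrow> ins_lbl t (\<gamma> q'))
      else (let r = (if p \<le> t then p else p - 1) in
            if q = Some r then t + 1 else ins_lbl t (\<gamma> r)))"

definition vas_elem :: "nat \<Rightarrow> (nat \<Rightarrow> nat) \<Rightarrow> nat option \<Rightarrow> nat set \<Rightarrow> (nat \<Rightarrow> nat) \<Rightarrow> complex" where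
  "vas_elem m \<gamma> q v =
     (\<lambda>\<pi>. \<Sum>j\<in>v. delta (vas_alpha m \<gamma> q (j - 1)) \<pi> - delta (vas_alpha m \<gamma> q j) \<pi>)"

definition gen_vassiliev :: "nat \<Rightarrow> ((nat \<Rightarrow> nat) \<Rightarrow> complex) set" where
  "gen_vassiliev m = {vas_elem m \<gamma> q v | \<gamma> q v.
      2 \<le> m \<and> \<gamma> permutes {1..m - 1} \<and>
      (case q of None \<Rightarrow> True | Some q' \<Rightarrow> q' \<in> {1..m - 1}) \<and>
      (\<exists>j0 \<in> {1..m - 1}. v = {(\<gamma> ^^ n) j0 | n. True})}"

inductive_set vspan :: "nat \<Rightarrow> ((nat \<Rightarrow> nat) \<Rightarrow> complex) set" for m where
  zero: "(\<lambda>_. 0) \<in> vspan m"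
| add: "a \<in> vspan m \<Longrightarrow> e \<in> gen_vassiliev m \<Longrightarrow> (\<lambda>\<pi>. a \<pi> + c * e \<pi>) \<in> vspan m"

text \<open>Equality of classes in H_m = C[S_m]/V_m.\<close>
definition hequiv :: "nat \<Rightarrow> ((nat \<Rightarrow> nat) \<Rightarrow> complex) \<Rightarrow> ((nat \<Rightarrow> nat) \<Rightarrow> complex) \<Rightarrow> bool" where
  "hequiv m a b \<longleftrightarrow> (\<lambda>\<pi>. a \<pi> - b \<pi>) \<in> vspan m"

definition conc :: "nat \<Rightarrow> (nat \<Rightarrow> nat) \<Rightarrow> (nat \<Rightarrow> nat) \<Rightarrow> nat \<Rightarrow> nat" where
  "conc m \<alpha> \<beta> = (\<lambda>i. if i \<le> m then \<alpha> i else \<beta> (i - m) + m)"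

definition cprod :: "nat \<Rightarrow> nat \<Rightarrow> ((nat \<Rightarrow> nat) \<Rightarrow> complex) \<Rightarrow> ((nat \<Rightarrow> nat) \<Rightarrow> complex)
                      \<Rightarrow> (nat \<Rightarrow> nat) \<Rightarrow> complex" where
  "cprod m m' a b = (\<lambda>\<pi>. \<Sum>\<alpha>\<in>{\<alpha>. \<alpha> permutes {1..m}}. \<Sum>\<beta>\<in>{\<beta>. \<beta> permutes {1..m'}}.
       if conc m \<alpha> \<beta> = \<pi> then a \<alpha> * b \<beta> else 0)"

definition sigma :: "nat \<Rightarrow> nat \<Rightarrow> nat" where
  "sigma m i = (if 1 \<le> i \<and> i < m then i + 1 else if i = m \<and> 0 < m then 1 else i)"

definition cshift :: "nat \<Rightarrow> nat \<Rightarrow> (nat \<Rightarrow> nat) \<Rightarrow> nat \<Rightarrow> nat" where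
  "cshift m k \<alpha> = (inv (sigma m) ^^ k) \<circ> \<alpha> \<circ> (sigma m ^^ k)"

end

theory Submission
  imports Defs "HOL-Combinatorics.Orbits" "HOL-Combinatorics.Cycles"
begin

text \<open>Inserting a free leg commutes with concatenation: inserting it into \<open>\<alpha>\<close> in the gap \<open>t\<close>
  and then appending \<open>\<beta>\<close> gives the same permutation as inserting it into \<open>\<alpha>#\<beta>\<close> in the
  gap \<open>t\<close>, and symmetrically for \<open>\<beta>\<close> with the gap, the point \<open>q\<close> and the cycle \<open>v\<close>
  shifted by \<open>m\<close>. Hence the push-forward of a generalized Vassiliev element along
  \<open>\<alpha> \<mapsto> \<alpha>#\<beta>\<close> or along \<open>\<beta> \<mapsto> \<alpha>#\<beta>\<close> is again one, and the bilinear concatenation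
  product of an element of \<open>V_m\<close> with anything, or of anything with an element of \<open>V_m'\<close>,
  lies in \<open>V_(m+m')\<close>.

  Cyclic shifts are invisible in \<open>H_m\<close>: reading the point 1 of \<open>\<alpha>\<close> as a free leg in the first
  gap gives \<open>\<gamma>\<close> and \<open>q\<close> with \<open>\<alpha> = \<alpha>_0\<close>, while \<open>\<alpha>_(m-1)\<close> is the rotation
  \<open>\<sigma>_m\<^sup>-\<^sup>1 \<alpha> \<sigma>_m\<close>; summing \<open>E(\<gamma>,q,v)\<close> over all cycles \<open>v\<close> of \<open>\<gamma>\<close> telescopes to
  \<open>\<alpha>_0 - \<alpha>_(m-1)\<close>.\<close>

lemma vspan_add:
  assumes "a \<in> vspan m" "b \<in> vspan m" shows "(\<lambda>\<pi>. a \<pi> + b \<pi>) \<in> vspan m"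
  using assms(2)
proof (induction b rule: vspan.induct)
  case zero then show ?case using assms(1) by simp
next
  case (add b e c)
  then have "(\<lambda>\<pi>. (a \<pi> + b \<pi>) + c * e \<pi>) \<in> vspan m" by (intro vspan.add)
  then show ?case by (simp add: add.assoc)
qed

lemma vspan_scale: "a \<in> vspan m \<Longrightarrow> (\<lambda>\<pi>. c * a \<pi>) \<in> vspan m"
proof (induction a rule: vspan.induct)
  case zero then show ?case using vspan.zero by simp
next
  case (add a e d)
  then have "(\<lambda>\<pi>. c * a \<pi> + (c * d) * e \<pi>) \<in> vspan m" by (intro vspan.add)
  then show ?case by (simp add: algebra_simps)
qed

lemma vspan_sum: "(\<And>i. i \<in> I \<Longrightarrow> f i \<in> vspan m) \<Longrightarrow> (\<lambda>\<pi>. \<Sum>i\<in>I. f i \<pi>) \<in> vspan m"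
proof (induction I rule: infinite_finite_induct)
  case (insert i I)
  then show ?case using vspan_add[of "f i" m "\<lambda>\<pi>. \<Sum>i\<in>I. f i \<pi>"] by simp
qed (simp_all add: vspan.zero)

lemma gen_vassiliev_in_vspan: "e \<in> gen_vassiliev m \<Longrightarrow> e \<in> vspan m"
  using vspan.add[OF vspan.zero, of e m 1] by simp

lemma gen_vassiliev_intro:
  assumes "2 \<le> m" "\<gamma> permutes {1..m - 1}" "case q of None \<Rightarrow> True | Some q' \<Rightarrow> q' \<in> {1..m - 1}"
    "j0 \<in> {1..m - 1}"
  shows "vas_elem m \<gamma> q {(\<gamma> ^^ n) j0 | n. True} \<in> gen_vassiliev m"
  using assms unfolding gen_vassiliev_def by blast

lemma hequiv_refl: "hequiv m a a"
  by (simp add: hequiv_def vspan.zero)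

lemma hequiv_trans: "hequiv m a b \<Longrightarrow> hequiv m b c \<Longrightarrow> hequiv m a c"
  unfolding hequiv_def using vspan_add[of "\<lambda>\<pi>. a \<pi> - b \<pi>" m "\<lambda>\<pi>. b \<pi> - c \<pi>"] by simp

subsection \<open>Inserting a free leg\<close>

lemma ins_lbl_eq_iff [simp]: "ins_lbl t x = ins_lbl t y \<longleftrightarrow> x = y"
  by (auto simp: ins_lbl_def)

lemma ins_lbl_neq_gap [simp]: "ins_lbl t x \<noteq> Suc t" "Suc t \<noteq> ins_lbl t x"
  by (auto simp: ins_lbl_def)

lemma ins_lbl_range: "r \<in> {1..m - 1} \<Longrightarrow> t \<le> m - 1 \<Longrightarrow> ins_lbl t r \<in> {1..m}"
  by (auto simp: ins_lbl_def)

lemma ins_lbl_cases: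
  assumes "p \<in> {1..m}" "t \<le> m - 1"
  obtains "p = t + 1" | r where "r \<in> {1..m - 1}" "p = ins_lbl t r"
proof -
  consider "p = t + 1" | "p \<le> t" | "t + 1 < p" by linarith
  then show ?thesis
  proof cases
    case 3
    then have "p - 1 \<in> {1..m - 1}" "p = ins_lbl t (p - 1)" using assms by (auto simp: ins_lbl_def)
    then show ?thesis by (rule that(2))
  qed (use assms that(1) that(2)[of p] in \<open>auto simp: ins_lbl_def\<close>)
qed

lemma vas_alpha_outside: "p \<notin> {1..m} \<Longrightarrow> vas_alpha m \<gamma> q t p = p"
  unfolding vas_alpha_def by (subst if_P) auto

lemma vas_alpha_gap:
  "t \<le> m - 1 \<Longrightarrow> 1 \<le> m \<Longrightarrow>
    vas_alpha m \<gamma> q t (Suc t) = (case q of None \<Rightarrow> Suc t | Some q' \<Rightarrow> ins_lbl t (\<gamma> q'))"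
  by (auto simp: vas_alpha_def split: option.splits)

lemma vas_alpha_ins_lbl:
  "r \<in> {1..m - 1} \<Longrightarrow> t \<le> m - 1 \<Longrightarrow>
    vas_alpha m \<gamma> q t (ins_lbl t r) = (if q = Some r then t + 1 else ins_lbl t (\<gamma> r))"
  by (auto simp: vas_alpha_def ins_lbl_def Let_def)

lemma vas_alpha_permutes:
  assumes \<gamma>: "\<gamma> permutes {1..m - 1}" and q: "case q of None \<Rightarrow> True | Some q' \<Rightarrow> q' \<in> {1..m - 1}"
    and t: "t \<le> m - 1" and m: "1 \<le> m"
  shows "vas_alpha m \<gamma> q t permutes {1..m}"
proof (rule inj_imp_permutes)
  have \<gamma>_range: "\<gamma> r \<in> {1..m - 1}" if "r \<in> {1..m - 1}" for r using permutes_in_image[OF \<gamma>] that by blast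
  show "vas_alpha m \<gamma> q t p \<in> {1..m}" if p: "p \<in> {1..m}" for p
    by (cases rule: ins_lbl_cases[OF p t])
      (use q t m \<gamma>_range ins_lbl_range in \<open>auto simp: vas_alpha_gap vas_alpha_ins_lbl split: option.splits\<close>)
  show "inj_on (vas_alpha m \<gamma> q t) {1..m}"
  proof (rule inj_onI)
    fix x y assume x: "x \<in> {1..m}" and y: "y \<in> {1..m}"
      and eq: "vas_alpha m \<gamma> q t x = vas_alpha m \<gamma> q t y"
    have "inj \<gamma>" using \<gamma> by (simp add: permutes_inj)
    then show "x = y"
      by (cases rule: ins_lbl_cases[OF x t]; cases rule: ins_lbl_cases[OF y t])
        (use eq t m in \<open>auto simp: vas_alpha_gap vas_alpha_ins_lbl inj_eq split: option.splits if_splits\<close>)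
  qed
qed (simp_all add: vas_alpha_outside)

lemma conc_outside:
  assumes "\<And>i. i \<notin> {1..m} \<Longrightarrow> \<alpha> i = i" "\<And>i. i \<notin> {1..m'} \<Longrightarrow> \<beta> i = i" "p \<notin> {1..m + m'}"
  shows "conc m \<alpha> \<beta> p = p"
proof (cases "p \<le> m")
  case False
  then have "p - m \<notin> {1..m'}" using assms(3) by auto
  with False show ?thesis using assms(2) by (simp add: conc_def)
qed (use assms(1,3) in \<open>auto simp: conc_def\<close>)

lemma conc_permutes:
  assumes \<alpha>: "\<alpha> permutes {1..m}" and \<beta>: "\<beta> permutes {1..m'}"
  shows "conc m \<alpha> \<beta> permutes {1..m + m'}"
proof -
  have \<alpha>_range: "1 \<le> \<alpha> i \<and> \<alpha> i \<le> m" if "1 \<le> i" "i \<le> m" for i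
    by (rule permutes_in_seg[OF \<alpha>]) (use that in auto)
  have \<beta>_range: "1 \<le> \<beta> (i - m) \<and> \<beta> (i - m) \<le> m'" if "m < i" "i \<le> m + m'" for i
    by (rule permutes_in_seg[OF \<beta>]) (use that in auto)
  show ?thesis
  proof (rule inj_imp_permutes)
    show "conc m \<alpha> \<beta> i \<in> {1..m + m'}" if "i \<in> {1..m + m'}" for i
      using that \<alpha>_range[of i] \<beta>_range[of i] by (auto simp: conc_def)
    show "conc m \<alpha> \<beta> i = i" if "i \<notin> {1..m + m'}" for i
      using conc_outside[OF permutes_not_in[OF \<alpha>] permutes_not_in[OF \<beta>] that] .
    show "inj_on (conc m \<alpha> \<beta>) {1..m + m'}"
    proof (rule inj_onI)
      fix x y assume "x \<in> {1..m + m'}" "y \<in> {1..m + m'}" "conc m \<alpha> \<beta> x = conc m \<alpha> \<beta> y"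
      then show "x = y"
        using \<alpha>_range[of x] \<alpha>_range[of y] \<beta>_range[of x] \<beta>_range[of y]
          permutes_inj[OF \<alpha>] permutes_inj[OF \<beta>]
        by (auto simp: conc_def inj_eq split: if_splits)
    qed
  qed simp
qed

lemma conc_funpow_left:
  assumes "\<gamma> permutes {1..k}" "j \<in> {1..k}"
  shows "(conc k \<gamma> \<beta> ^^ n) j = (\<gamma> ^^ n) j"
  by (induction n) (use permutes_in_funpow_image[OF assms] in \<open>auto simp: conc_def\<close>)

lemma conc_funpow_right:
  assumes "\<gamma> permutes {1..k}" "j \<in> {1..k}"
  shows "(conc m \<alpha> \<gamma> ^^ n) (j + m) = (\<gamma> ^^ n) j + m"
proof (induction n)
  case (Suc n)
  have "(\<gamma> ^^ n) j \<noteq> 0" using permutes_in_funpow_image[OF assms, of n] by auto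
  with Suc show ?case by (simp add: conc_def)
qed simp

lemma ins_lbl_shift: "ins_lbl (t + m) (y + m) = ins_lbl t y + m"
  by (simp add: ins_lbl_def)

lemma vas_alpha_conc_left:
  assumes \<beta>: "\<beta> permutes {1..m'}" and q: "case q of None \<Rightarrow> True | Some q' \<Rightarrow> q' \<in> {1..m - 1}"
    and t: "t \<le> m - 1" and m: "1 \<le> m"
  shows "vas_alpha (m + m') (conc (m - 1) \<gamma> \<beta>) q t = conc m (vas_alpha m \<gamma> q t) \<beta>"
proof
  fix p
  show "vas_alpha (m + m') (conc (m - 1) \<gamma> \<beta>) q t p = conc m (vas_alpha m \<gamma> q t) \<beta> p"
  proof (cases "p \<in> {1..m + m'}")
    case False
    then show ?thesis
      using conc_outside[OF vas_alpha_outside permutes_not_in[OF \<beta>] False] by (simp add: vas_alpha_outside)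
  next
    case True
    have t': "t \<le> m + m' - 1" using t by simp
    show ?thesis
    proof (cases rule: ins_lbl_cases[OF True t'])
      case 1
      then show ?thesis using q t m by (auto simp: vas_alpha_gap conc_def split: option.splits)
    next
      case (2 r)
      show ?thesis
      proof (cases "r \<le> m - 1")
        case True
        then have "r \<in> {1..m - 1}" "ins_lbl t r \<le> m" using 2 by (auto simp: ins_lbl_def)
        then show ?thesis using 2 t t' by (simp add: vas_alpha_ins_lbl conc_def)
      next
        case False
        let ?b = "\<beta> (r - (m - 1))"
        have "1 \<le> ?b" by (rule permutes_in_seg[OF \<beta>, THEN conjunct1]) (use 2 False in auto)
        have "q \<noteq> Some r" using q False by (auto split: option.splits)
        then have "vas_alpha (m + m') (conc (m - 1) \<gamma> \<beta>) q t p = ins_lbl t (?b + (m - 1))"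
          using 2 t' False by (simp add: vas_alpha_ins_lbl conc_def)
        also have "\<dots> = ?b + m" using \<open>1 \<le> ?b\<close> t m by (auto simp: ins_lbl_def)
        also have "\<dots> = conc m (vas_alpha m \<gamma> q t) \<beta> p"
          using 2 False t m by (auto simp: conc_def ins_lbl_def intro!: arg_cong[where f = \<beta>])
        finally show ?thesis .
      qed
    qed
  qed
qed

lemma vas_alpha_conc_right:
  assumes \<alpha>: "\<alpha> permutes {1..m}" and q: "case q of None \<Rightarrow> True | Some q' \<Rightarrow> q' \<in> {1..m' - 1}"
    and t: "t \<le> m' - 1" and m': "1 \<le> m'"
  shows "vas_alpha (m + m') (conc m \<alpha> \<gamma>) (map_option (\<lambda>x. x + m) q) (t + m)
    = conc m \<alpha> (vas_alpha m' \<gamma> q t)"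
proof
  fix p
  let ?Q = "map_option (\<lambda>x. x + m) q"
  show "vas_alpha (m + m') (conc m \<alpha> \<gamma>) ?Q (t + m) p = conc m \<alpha> (vas_alpha m' \<gamma> q t) p"
  proof (cases "p \<in> {1..m + m'}")
    case False
    then show ?thesis
      using conc_outside[OF permutes_not_in[OF \<alpha>] vas_alpha_outside False] by (simp add: vas_alpha_outside)
  next
    case True
    have t': "t + m \<le> m + m' - 1" using t m' by simp
    show ?thesis
    proof (cases rule: ins_lbl_cases[OF True t'])
      case 1
      then show ?thesis using q t m'
        by (auto simp: vas_alpha_gap conc_def ins_lbl_shift[symmetric] split: option.splits)
    next
      case (2 r)
      show ?thesis
      proof (cases "r \<le> m")
        case True
        have "1 \<le> \<alpha> r \<and> \<alpha> r \<le> m" by (rule permutes_in_seg[OF \<alpha>]) (use 2 True in auto)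
        moreover have "?Q \<noteq> Some r" using q True by (auto split: option.splits)
        ultimately have "vas_alpha (m + m') (conc m \<alpha> \<gamma>) ?Q (t + m) p = \<alpha> r"
          using 2 True t' by (simp add: vas_alpha_ins_lbl conc_def ins_lbl_def[of "t + m" "\<alpha> r"])
        moreover have "p = r" using 2 True by (simp add: ins_lbl_def)
        ultimately show ?thesis using True by (simp add: conc_def)
      next
        case False
        define s where "s = r - m"
        have r: "r = s + m" and s: "s \<in> {1..m' - 1}" using 2 False by (auto simp: s_def)
        have "vas_alpha (m + m') (conc m \<alpha> \<gamma>) ?Q (t + m) p
            = (if ?Q = Some r then Suc (t + m) else ins_lbl (t + m) (conc m \<alpha> \<gamma> r))"
          using 2 t' by (simp add: vas_alpha_ins_lbl)
        also have "\<dots> = (if q = Some s then Suc t else ins_lbl t (\<gamma> s)) + m"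
          using r s by (auto simp: conc_def ins_lbl_shift[symmetric])
        also have "\<dots> = vas_alpha m' \<gamma> q t (ins_lbl t s) + m"
          using s t by (simp add: vas_alpha_ins_lbl)
        also have "\<dots> = conc m \<alpha> (vas_alpha m' \<gamma> q t) p"
          using 2 s by (auto simp: conc_def r ins_lbl_shift[symmetric] ins_lbl_def)
        finally show ?thesis .
      qed
    qed
  qed
qed

subsection \<open>Push-forward along a map of permutations\<close>

definition pushforward ::
    "nat \<Rightarrow> ((nat \<Rightarrow> nat) \<Rightarrow> nat \<Rightarrow> nat) \<Rightarrow> ((nat \<Rightarrow> nat) \<Rightarrow> complex) \<Rightarrow> (nat \<Rightarrow> nat) \<Rightarrow> complex" where
  "pushforward m \<phi> a = (\<lambda>\<pi>. \<Sum>\<alpha>\<in>{\<alpha>. \<alpha> permutes {1..m}}. of_bool (\<phi> \<alpha> = \<pi>) * a \<alpha>)"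

lemma pushforward_delta: "\<alpha> permutes {1..m} \<Longrightarrow> pushforward m \<phi> (delta \<alpha>) = delta (\<phi> \<alpha>)"
  unfolding pushforward_def delta_def
  by (rule ext) (simp add: if_distrib[of "\<lambda>x. _ * x"] finite_permutations cong: if_cong)

lemma pushforward_add_scaled:
  "pushforward m \<phi> (\<lambda>\<pi>. a \<pi> + c * e \<pi>) = (\<lambda>\<pi>. pushforward m \<phi> a \<pi> + c * pushforward m \<phi> e \<pi>)"
  unfolding pushforward_def by (rule ext) (simp add: sum.distrib sum_distrib_left algebra_simps)

lemma pushforward_diff:
  "pushforward m \<phi> (\<lambda>\<pi>. a \<pi> - b \<pi>) = (\<lambda>\<pi>. pushforward m \<phi> a \<pi> - pushforward m \<phi> b \<pi>)"
  unfolding pushforward_def by (rule ext) (simp add: sum_subtractf algebra_simps)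

lemma pushforward_sum:
  "pushforward m \<phi> (\<lambda>\<pi>. \<Sum>j\<in>J. f j \<pi>) = (\<lambda>\<pi>. \<Sum>j\<in>J. pushforward m \<phi> (f j) \<pi>)"
  unfolding pushforward_def by (rule ext) (simp add: sum_distrib_left sum.swap[of _ J])

lemma pushforward_vspan:
  assumes "\<And>e. e \<in> gen_vassiliev m \<Longrightarrow> pushforward m \<phi> e \<in> vspan n" and "d \<in> vspan m"
  shows "pushforward m \<phi> d \<in> vspan n"
  using assms(2)
proof (induction d rule: vspan.induct)
  case zero then show ?case by (simp add: pushforward_def vspan.zero)
next
  case (add a e c)
  then show ?case
    unfolding pushforward_add_scaled using assms(1) vspan_add vspan_scale by blast
qed

lemma pushforward_vas_elem:
  assumes \<gamma>: "\<gamma> permutes {1..m - 1}" and q: "case q of None \<Rightarrow> True | Some q' \<Rightarrow> q' \<in> {1..m - 1}"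
    and v: "v \<subseteq> {1..m - 1}"
    and \<phi>: "\<And>t. t \<le> m - 1 \<Longrightarrow> \<phi> (vas_alpha m \<gamma> q t) = vas_alpha n \<gamma>' q' (t + s)"
  shows "pushforward m \<phi> (vas_elem m \<gamma> q v) = vas_elem n \<gamma>' q' ((\<lambda>j. j + s) ` v)"
proof -
  have pf: "pushforward m \<phi> (delta (vas_alpha m \<gamma> q t)) = delta (vas_alpha n \<gamma>' q' (t + s))"
    if "t \<le> m - 1" "1 \<le> m" for t
    using pushforward_delta[OF vas_alpha_permutes[OF \<gamma> q that]] \<phi>[OF that(1)] by simp
  have "pushforward m \<phi> (vas_elem m \<gamma> q v) =
      (\<lambda>\<pi>. \<Sum>j\<in>v. delta (vas_alpha n \<gamma>' q' (j - 1 + s)) \<pi> - delta (vas_alpha n \<gamma>' q' (j + s)) \<pi>)"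
    unfolding vas_elem_def pushforward_sum pushforward_diff
  proof (intro ext sum.cong refl)
    fix j \<pi> assume "j \<in> v"
    then have "j \<in> {1..m - 1}" using v by blast
    then have "j - 1 \<le> m - 1" "j \<le> m - 1" "1 \<le> m" by auto
    then show "pushforward m \<phi> (delta (vas_alpha m \<gamma> q (j - 1))) \<pi> - pushforward m \<phi> (delta (vas_alpha m \<gamma> q j)) \<pi>
        = delta (vas_alpha n \<gamma>' q' (j - 1 + s)) \<pi> - delta (vas_alpha n \<gamma>' q' (j + s)) \<pi>"
      by (simp add: pf)
  qed
  also have "\<dots> = vas_elem n \<gamma>' q' ((\<lambda>j. j + s) ` v)"
    unfolding vas_elem_def using v by (intro ext) (auto simp: sum.reindex intro!: sum.cong)
  finally show ?thesis .
qed

lemma pushforward_conc_left_gen_vassiliev: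
  assumes e: "e \<in> gen_vassiliev m" and \<beta>: "\<beta> permutes {1..m'}"
  shows "pushforward m (\<lambda>\<alpha>. conc m \<alpha> \<beta>) e \<in> gen_vassiliev (m + m')"
proof -
  obtain \<gamma> q j0 where e: "e = vas_elem m \<gamma> q {(\<gamma> ^^ n) j0 | n. True}" and m: "2 \<le> m"
    and \<gamma>: "\<gamma> permutes {1..m - 1}" and q: "case q of None \<Rightarrow> True | Some q' \<Rightarrow> q' \<in> {1..m - 1}"
    and j0: "j0 \<in> {1..m - 1}"
    using e unfolding gen_vassiliev_def by blast
  let ?v = "{(\<gamma> ^^ n) j0 | n. True}"
  let ?\<gamma>' = "conc (m - 1) \<gamma> \<beta>"
  have v: "?v \<subseteq> {1..m - 1}" using permutes_in_funpow_image[OF \<gamma> j0] by auto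
  have "pushforward m (\<lambda>\<alpha>. conc m \<alpha> \<beta>) e = vas_elem (m + m') ?\<gamma>' q ((\<lambda>j. j + 0) ` ?v)"
    unfolding e by (rule pushforward_vas_elem[OF \<gamma> q v]) (use vas_alpha_conc_left[OF \<beta> q] m in auto)
  also have "\<dots> = vas_elem (m + m') ?\<gamma>' q {(?\<gamma>' ^^ n) j0 | n. True}"
    using conc_funpow_left[OF \<gamma> j0] by simp
  also have "\<dots> \<in> gen_vassiliev (m + m')"
    using conc_permutes[OF \<gamma> \<beta>] m q j0 by (intro gen_vassiliev_intro) (auto split: option.splits)
  finally show ?thesis .
qed

lemma pushforward_conc_right_gen_vassiliev:
  assumes e: "e \<in> gen_vassiliev m'" and \<alpha>: "\<alpha> permutes {1..m}"
  shows "pushforward m' (conc m \<alpha>) e \<in> gen_vassiliev (m + m')"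
proof -
  obtain \<gamma> q j0 where e: "e = vas_elem m' \<gamma> q {(\<gamma> ^^ n) j0 | n. True}" and m': "2 \<le> m'"
    and \<gamma>: "\<gamma> permutes {1..m' - 1}" and q: "case q of None \<Rightarrow> True | Some q' \<Rightarrow> q' \<in> {1..m' - 1}"
    and j0: "j0 \<in> {1..m' - 1}"
    using e unfolding gen_vassiliev_def by blast
  let ?v = "{(\<gamma> ^^ n) j0 | n. True}"
  let ?\<gamma>' = "conc m \<alpha> \<gamma>"
  let ?q' = "map_option (\<lambda>x. x + m) q"
  have v: "?v \<subseteq> {1..m' - 1}" using permutes_in_funpow_image[OF \<gamma> j0] by auto
  have "pushforward m' (conc m \<alpha>) e = vas_elem (m + m') ?\<gamma>' ?q' ((\<lambda>j. j + m) ` ?v)"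
    unfolding e by (rule pushforward_vas_elem[OF \<gamma> q v]) (use vas_alpha_conc_right[OF \<alpha> q] m' in auto)
  also have "\<dots> = vas_elem (m + m') ?\<gamma>' ?q' {(?\<gamma>' ^^ n) (j0 + m) | n. True}"
    using conc_funpow_right[OF \<gamma> j0] by (auto intro!: arg_cong[where f = "vas_elem _ _ _"])
  also have "\<dots> \<in> gen_vassiliev (m + m')"
    using conc_permutes[OF \<alpha> \<gamma>] m' q j0 by (intro gen_vassiliev_intro) (auto split: option.splits)
  finally show ?thesis .
qed

lemma cprod_eq_sum_pushforward_left:
  "cprod m m' a b = (\<lambda>\<pi>. \<Sum>\<beta>\<in>{\<beta>. \<beta> permutes {1..m'}}. b \<beta> * pushforward m (\<lambda>\<alpha>. conc m \<alpha> \<beta>) a \<pi>)"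
  unfolding cprod_def pushforward_def
  by (rule ext, subst sum.swap) (auto simp: sum_distrib_left intro!: sum.cong)

lemma cprod_eq_sum_pushforward_right:
  "cprod m m' a b = (\<lambda>\<pi>. \<Sum>\<alpha>\<in>{\<alpha>. \<alpha> permutes {1..m}}. a \<alpha> * pushforward m' (conc m \<alpha>) b \<pi>)"
  unfolding cprod_def pushforward_def
  by (rule ext) (auto simp: sum_distrib_left intro!: sum.cong)

lemma cprod_vspan_left: "a \<in> vspan m \<Longrightarrow> cprod m m' a b \<in> vspan (m + m')"
  unfolding cprod_eq_sum_pushforward_left
  using pushforward_vspan gen_vassiliev_in_vspan pushforward_conc_left_gen_vassiliev
  by (intro vspan_sum vspan_scale) blast

lemma cprod_vspan_right: "b \<in> vspan m' \<Longrightarrow> cprod m m' a b \<in> vspan (m + m')"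
  unfolding cprod_eq_sum_pushforward_right
  using pushforward_vspan gen_vassiliev_in_vspan pushforward_conc_right_gen_vassiliev
  by (intro vspan_sum vspan_scale) blast

lemma cprod_hequiv:
  assumes "hequiv m a a'" "hequiv m' b b'"
  shows "hequiv (m + m') (cprod m m' a b) (cprod m m' a' b')"
proof -
  have "(\<lambda>\<pi>. cprod m m' (\<lambda>x. a x - a' x) b \<pi> + cprod m m' a' (\<lambda>x. b x - b' x) \<pi>) \<in> vspan (m + m')"
    using assms by (intro vspan_add cprod_vspan_left cprod_vspan_right) (simp_all add: hequiv_def)
  moreover have "cprod m m' (\<lambda>x. a x - a' x) b \<pi> + cprod m m' a' (\<lambda>x. b x - b' x) \<pi>
      = cprod m m' a b \<pi> - cprod m m' a' b' \<pi>" for \<pi>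
    unfolding cprod_def sum_subtractf[symmetric] sum.distrib[symmetric]
    by (intro sum.cong refl) (simp add: algebra_simps)
  ultimately show ?thesis unfolding hequiv_def by simp
qed

lemma cprod_delta:
  assumes "\<alpha> permutes {1..m}" "\<beta> permutes {1..m'}"
  shows "cprod m m' (delta \<alpha>) (delta \<beta>) = delta (conc m \<alpha> \<beta>)"
proof -
  have "cprod m m' (delta \<alpha>) (delta \<beta>) = pushforward m' (conc m \<alpha>) (delta \<beta>)"
    unfolding cprod_eq_sum_pushforward_right delta_def
    using assms(1) by (simp add: if_distrib[of "\<lambda>x. x * _"] finite_permutations cong: if_cong)
  then show ?thesis using pushforward_delta[OF assms(2)] by simp
qed

subsection \<open>Invariance under cyclic shifts\<close>

lemma sigma_permutes: "sigma m permutes {1..m}"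
  by (rule inj_imp_permutes) (auto simp: sigma_def inj_on_def)

lemma inv_sigma: "y \<in> {1..m} \<Longrightarrow> inv (sigma m) y = (if y = 1 then m else y - 1)"
  by (subst permutes_inv_eq[OF sigma_permutes]) (auto simp: sigma_def)

lemma cshift_Suc: "cshift m (Suc k) \<alpha> = inv (sigma m) \<circ> cshift m k \<alpha> \<circ> sigma m"
  unfolding cshift_def by (simp add: fun_eq_iff funpow_swap1)

lemma cshift_permutes: "\<alpha> permutes {1..m} \<Longrightarrow> cshift m k \<alpha> permutes {1..m}"
  unfolding cshift_def by (intro permutes_compose permutes_funpow sigma_permutes permutes_inv)

text \<open>Reading the point 1 of \<open>\<alpha>\<close> as a free leg \<open>x\<close> in the gap \<open>t = 0\<close>:
  \<open>delete_first_leg m \<alpha>\<close> is the permutation of the remaining points, relabelled down by one,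
  and \<open>first_leg_pred \<alpha>\<close> is the point \<open>q\<close> with \<open>q \<mapsto> x\<close> (\<open>None\<close> if \<open>x\<close> is fixed).\<close>

definition delete_first_leg :: "nat \<Rightarrow> (nat \<Rightarrow> nat) \<Rightarrow> nat \<Rightarrow> nat" where
  "delete_first_leg m \<alpha> r =
     (if r \<in> {1..m - 1} then (if \<alpha> (r + 1) = 1 then \<alpha> 1 else \<alpha> (r + 1)) - 1 else r)"

definition first_leg_pred :: "(nat \<Rightarrow> nat) \<Rightarrow> nat option" where
  "first_leg_pred \<alpha> = (if \<alpha> 1 = 1 then None else Some (inv \<alpha> 1 - 1))"

lemma first_leg_pred_eq_None: "first_leg_pred \<alpha> = None \<longleftrightarrow> \<alpha> 1 = 1"
  by (simp add: first_leg_pred_def)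

lemma first_leg_pred_eq_Some:
  assumes \<alpha>: "\<alpha> permutes {1..m}"
  shows "first_leg_pred \<alpha> = Some r \<longleftrightarrow> r \<in> {1..m - 1} \<and> \<alpha> (r + 1) = 1"
proof
  assume "first_leg_pred \<alpha> = Some r"
  then have \<alpha>1: "\<alpha> 1 \<noteq> 1" and r: "r = inv \<alpha> 1 - 1" by (auto simp: first_leg_pred_def split: if_splits)
  have p: "\<alpha> (inv \<alpha> 1) = 1" using permutes_inv_eq[OF \<alpha>] by blast
  with \<alpha>1 have "inv \<alpha> 1 \<noteq> 1" by auto
  moreover have "inv \<alpha> 1 \<in> {1..m}"
    using p \<open>inv \<alpha> 1 \<noteq> 1\<close> permutes_not_in[OF \<alpha>, of "inv \<alpha> 1"] by auto
  ultimately show "r \<in> {1..m - 1} \<and> \<alpha> (r + 1) = 1" using p r by auto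
next
  assume r: "r \<in> {1..m - 1} \<and> \<alpha> (r + 1) = 1"
  then have "1 \<noteq> r + 1" by simp
  then have "\<alpha> 1 \<noteq> \<alpha> (r + 1)" using permutes_inj[OF \<alpha>] by (simp add: inj_eq)
  moreover have "inv \<alpha> 1 = r + 1" using r permutes_inv_eq[OF \<alpha>] by blast
  ultimately show "first_leg_pred \<alpha> = Some r" using r by (simp add: first_leg_pred_def)
qed

lemma delete_first_leg_eq:
  "r \<in> {1..m - 1} \<Longrightarrow> delete_first_leg m \<alpha> r = (if \<alpha> (r + 1) = 1 then \<alpha> 1 else \<alpha> (r + 1)) - 1"
  by (simp add: delete_first_leg_def)

lemma delete_first_leg_permutes:
  assumes \<alpha>: "\<alpha> permutes {1..m}"
  shows "delete_first_leg m \<alpha> permutes {1..m - 1}"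
proof (rule inj_imp_permutes)
  have range: "1 \<le> \<alpha> 1 \<and> \<alpha> 1 \<le> m" "1 \<le> \<alpha> (r + 1) \<and> \<alpha> (r + 1) \<le> m"
    and neq: "\<alpha> 1 \<noteq> \<alpha> (r + 1)" if "r \<in> {1..m - 1}" for r
    using that permutes_in_seg[OF \<alpha>, of 1] permutes_in_seg[OF \<alpha>, of "r + 1"] permutes_inj[OF \<alpha>]
    by (auto simp: inj_eq)
  show "delete_first_leg m \<alpha> r \<in> {1..m - 1}" if "r \<in> {1..m - 1}" for r
    using range[OF that] neq[OF that] that by (auto simp: delete_first_leg_def)
  show "inj_on (delete_first_leg m \<alpha>) {1..m - 1}"
  proof (rule inj_onI)
    fix r s assume r: "r \<in> {1..m - 1}" and s: "s \<in> {1..m - 1}"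
      and eq: "delete_first_leg m \<alpha> r = delete_first_leg m \<alpha> s"
    have "\<alpha> (r + 1) = \<alpha> (s + 1) \<Longrightarrow> r = s" using permutes_inj[OF \<alpha>] by (simp add: inj_eq)
    then show "r = s"
      using eq r s range[OF r] range[OF s] neq[OF r] neq[OF s]
      by (auto simp: delete_first_leg_def split: if_splits)
  qed
qed (auto simp: delete_first_leg_def)

lemma vas_alpha_delete_first_leg_0:
  assumes \<alpha>: "\<alpha> permutes {1..m}" and m: "1 \<le> m"
  shows "vas_alpha m (delete_first_leg m \<alpha>) (first_leg_pred \<alpha>) 0 = \<alpha>"
proof
  fix p
  let ?\<gamma> = "delete_first_leg m \<alpha>" and ?q = "first_leg_pred \<alpha>"
  have \<alpha>1: "1 \<le> \<alpha> 1 \<and> \<alpha> 1 \<le> m" using permutes_in_seg[OF \<alpha>] m by simp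
  show "vas_alpha m ?\<gamma> ?q 0 p = \<alpha> p"
  proof (cases "p \<in> {1..m}")
    case False
    then show ?thesis by (simp add: vas_alpha_outside permutes_not_in[OF \<alpha>])
  next
    case True
    have t: "0 \<le> m - 1" by simp
    show ?thesis
    proof (cases rule: ins_lbl_cases[OF True t])
      case 1
      show ?thesis
      proof (cases ?q)
        case None
        then show ?thesis using 1 m first_leg_pred_eq_None[of \<alpha>] by (simp add: vas_alpha_gap)
      next
        case (Some r)
        then have r: "r \<in> {1..m - 1}" "\<alpha> (r + 1) = 1" using first_leg_pred_eq_Some[OF \<alpha>] by auto
        moreover have "\<alpha> 1 \<noteq> 1" using Some by (auto simp: first_leg_pred_def)
        ultimately show ?thesis using 1 m Some \<alpha>1 by (simp add: vas_alpha_gap delete_first_leg_eq ins_lbl_def)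
      qed
    next
      case (2 r)
      have p: "p = r + 1" using 2 by (simp add: ins_lbl_def)
      have "vas_alpha m ?\<gamma> ?q 0 p = (if ?q = Some r then 1 else ins_lbl 0 (?\<gamma> r))"
        using 2 by (simp add: vas_alpha_ins_lbl)
      also have "\<dots> = \<alpha> p"
      proof (cases "\<alpha> (r + 1) = 1")
        case True
        then show ?thesis using 2 p first_leg_pred_eq_Some[OF \<alpha>, of r] by simp
      next
        case False
        moreover have "\<alpha> (r + 1) \<in> {1..m}" using 2 permutes_in_image[OF \<alpha>, of "r + 1"] by auto
        ultimately show ?thesis using 2 p first_leg_pred_eq_Some[OF \<alpha>, of r]
          by (simp add: delete_first_leg_eq ins_lbl_def)
      qed
      finally show ?thesis .
    qed
  qed
qed

lemma vas_alpha_delete_first_leg_last: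
  assumes \<alpha>: "\<alpha> permutes {1..m}" and m: "1 \<le> m"
  shows "vas_alpha m (delete_first_leg m \<alpha>) (first_leg_pred \<alpha>) (m - 1) = inv (sigma m) \<circ> \<alpha> \<circ> sigma m"
proof
  fix p
  let ?\<gamma> = "delete_first_leg m \<alpha>" and ?q = "first_leg_pred \<alpha>"
  have \<alpha>_range: "\<alpha> i \<in> {1..m}" if "i \<in> {1..m}" for i using permutes_in_image[OF \<alpha>] that by blast
  show "vas_alpha m ?\<gamma> ?q (m - 1) p = (inv (sigma m) \<circ> \<alpha> \<circ> sigma m) p"
  proof (cases "p \<in> {1..m}")
    case False
    then have "sigma m p = p" "\<alpha> p = p" "inv (sigma m) p = p"
      using permutes_not_in[OF \<alpha>] permutes_not_in[OF permutes_inv[OF sigma_permutes]]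
      by (auto simp: sigma_def)
    with False show ?thesis by (simp add: vas_alpha_outside)
  next
    case True
    have t: "m - 1 \<le> m - 1" by simp
    show ?thesis
    proof (cases rule: ins_lbl_cases[OF True t])
      case 1
      then have p: "p = m" "sigma m p = 1" using m by (auto simp: sigma_def)
      have \<alpha>1: "\<alpha> 1 \<in> {1..m}" using \<alpha>_range m by simp
      have gap: "vas_alpha m ?\<gamma> ?q (m - 1) m = (case ?q of None \<Rightarrow> m | Some q' \<Rightarrow> ins_lbl (m - 1) (?\<gamma> q'))"
        using vas_alpha_gap[of "m - 1" m ?\<gamma> ?q] m by (simp split: option.split)
      show ?thesis
      proof (cases ?q)
        case None
        then show ?thesis using p m gap first_leg_pred_eq_None[of \<alpha>] inv_sigma[of 1 m] by simp
      next
        case (Some r)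
        then have "r \<in> {1..m - 1}" "\<alpha> (r + 1) = 1" using first_leg_pred_eq_Some[OF \<alpha>] by auto
        moreover have "\<alpha> 1 \<noteq> 1" using Some by (auto simp: first_leg_pred_def)
        ultimately show ?thesis using p m gap Some \<alpha>1 inv_sigma[OF \<alpha>1]
          by (auto simp: delete_first_leg_eq ins_lbl_def)
      qed
    next
      case (2 r)
      have p: "p = r" "sigma m p = r + 1" using 2 by (auto simp: ins_lbl_def sigma_def)
      have \<alpha>r: "\<alpha> (r + 1) \<in> {1..m}" using 2 \<alpha>_range[of "r + 1"] by auto
      have "vas_alpha m ?\<gamma> ?q (m - 1) p = (if ?q = Some r then m else ins_lbl (m - 1) (?\<gamma> r))"
        using 2 m by (simp add: vas_alpha_ins_lbl)
      also have "\<dots> = inv (sigma m) (\<alpha> (r + 1))"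
        using 2 \<alpha>r first_leg_pred_eq_Some[OF \<alpha>, of r] inv_sigma[OF \<alpha>r]
        by (auto simp: delete_first_leg_eq ins_lbl_def)
      finally show ?thesis using p by simp
    qed
  qed
qed

lemma sum_orbits:
  assumes \<gamma>: "\<gamma> permutes S" and S: "finite S"
  shows "(\<Sum>v\<in>(\<lambda>j. {(\<gamma> ^^ n) j | n. True}) ` S. \<Sum>x\<in>v. f x) = (\<Sum>x\<in>S. f x)"
proof -
  have perm: "permutation \<gamma>" using \<gamma> S permutation_permutes by blast
  have orbits: "(\<lambda>j. {(\<gamma> ^^ n) j | n. True}) = orbit \<gamma>"
    using orbit_altdef_permutation[OF perm] by (simp add: fun_eq_iff)
  have sub: "orbit \<gamma> j \<subseteq> S" if "j \<in> S" for j using permutes_orbit_subset[OF \<gamma> that] .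
  have "S = \<Union> (orbit \<gamma> ` S)" using sub permutation_self_in_orbit[OF perm] by blast
  moreover have "\<forall>A\<in>orbit \<gamma> ` S. finite A" using sub finite_subset[OF _ S] by blast
  moreover have "A \<inter> B = {}" if "A \<in> orbit \<gamma> ` S" "B \<in> orbit \<gamma> ` S" "A \<noteq> B" for A B
  proof (rule ccontr)
    assume "A \<inter> B \<noteq> {}"
    then obtain x where "x \<in> A" "x \<in> B" by blast
    then have "orbit \<gamma> x = A" "orbit \<gamma> x = B"
      using that(1,2) orbit_cyclic_eq3[OF cyclic_on_orbit'[OF perm]] by auto
    with \<open>A \<noteq> B\<close> show False by simp
  qed
  ultimately have "sum f S = (\<Sum>v\<in>orbit \<gamma> ` S. sum f v)"
    using sum.Union_disjoint[of "orbit \<gamma> ` S" f] by simp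
  then show ?thesis unfolding orbits by simp
qed

lemma rotation_in_vspan:
  assumes \<alpha>: "\<alpha> permutes {1..m}"
  shows "(\<lambda>\<pi>. delta \<alpha> \<pi> - delta (inv (sigma m) \<circ> \<alpha> \<circ> sigma m) \<pi>) \<in> vspan m"
proof (cases "2 \<le> m")
  case False
  then have "sigma m = id" by (auto simp: sigma_def)
  then show ?thesis by (simp add: vspan.zero)
next
  case True
  let ?\<gamma> = "delete_first_leg m \<alpha>" and ?q = "first_leg_pred \<alpha>"
  let ?A = "vas_alpha m ?\<gamma> ?q"
  let ?cycles = "(\<lambda>j. {(?\<gamma> ^^ n) j | n. True}) ` {1..m - 1}"
  have \<gamma>: "?\<gamma> permutes {1..m - 1}" using delete_first_leg_permutes[OF \<alpha>] .
  have q: "case ?q of None \<Rightarrow> True | Some q' \<Rightarrow> q' \<in> {1..m - 1}"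
    using first_leg_pred_eq_Some[OF \<alpha>] by (auto split: option.split)
  have "(\<lambda>\<pi>. \<Sum>v\<in>?cycles. vas_elem m ?\<gamma> ?q v \<pi>) \<in> vspan m"
    by (intro vspan_sum gen_vassiliev_in_vspan) (use gen_vassiliev_intro[OF True \<gamma> q] in blast)
  moreover have "(\<Sum>v\<in>?cycles. vas_elem m ?\<gamma> ?q v \<pi>) = delta (?A 0) \<pi> - delta (?A (m - 1)) \<pi>" for \<pi>
  proof -
    have "(\<Sum>v\<in>?cycles. vas_elem m ?\<gamma> ?q v \<pi>)
        = (\<Sum>j\<in>{1..m - 1}. delta (?A (j - 1)) \<pi> - delta (?A j) \<pi>)"
      unfolding vas_elem_def by (rule sum_orbits[OF \<gamma>]) simp
    also have "\<dots> = delta (?A 0) \<pi> - delta (?A (m - 1)) \<pi>"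
      using sum_telescope''[of 0 "m - 1" "\<lambda>j. - delta (?A j) \<pi>"] by simp
    finally show ?thesis .
  qed
  ultimately show ?thesis
    using vas_alpha_delete_first_leg_0[OF \<alpha>] vas_alpha_delete_first_leg_last[OF \<alpha>] True by simp
qed

lemma hequiv_cshift:
  assumes "\<alpha> permutes {1..m}"
  shows "hequiv m (delta \<alpha>) (delta (cshift m k \<alpha>))"
proof (induction k)
  case 0 then show ?case by (simp add: cshift_def hequiv_refl)
next
  case (Suc k)
  moreover have "hequiv m (delta (cshift m k \<alpha>)) (delta (cshift m (Suc k) \<alpha>))"
    unfolding hequiv_def cshift_Suc by (rule rotation_in_vspan[OF cshift_permutes[OF assms]])
  ultimately show ?case by (rule hequiv_trans)
qed

theorem proposition14:
  fixes m m' :: nat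
  shows
    "(\<forall>\<alpha> \<alpha>' \<beta> \<beta>'. \<alpha> permutes {1..m} \<longrightarrow> \<alpha>' permutes {1..m} \<longrightarrow>
        \<beta> permutes {1..m'} \<longrightarrow> \<beta>' permutes {1..m'} \<longrightarrow>
        hequiv m (delta \<alpha>) (delta \<alpha>') \<longrightarrow> hequiv m' (delta \<beta>) (delta \<beta>') \<longrightarrow>
        hequiv (m + m') (delta (conc m \<alpha> \<beta>)) (delta (conc m \<alpha>' \<beta>')))
   \<and> (\<forall>\<alpha> \<beta> k l. \<alpha> permutes {1..m} \<longrightarrow> \<beta> permutes {1..m'} \<longrightarrow>
        hequiv (m + m') (delta (conc m \<alpha> \<beta>))
                        (delta (conc m (cshift m k \<alpha>) (cshift m' l \<beta>))))
   \<and> (\<forall>a a' b b'. a \<in> galg m \<longrightarrow> a' \<in> galg m \<longrightarrow> b \<in> galg m' \<longrightarrow> b' \<in> galg m' \<longrightarrow>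
        hequiv m a a' \<longrightarrow> hequiv m' b b' \<longrightarrow>
        hequiv (m + m') (cprod m m' a b) (cprod m m' a' b'))"
proof -
  have conc_hequiv: "hequiv (m + m') (delta (conc m \<alpha> \<beta>)) (delta (conc m \<alpha>' \<beta>'))"
    if "\<alpha> permutes {1..m}" "\<alpha>' permutes {1..m}" "\<beta> permutes {1..m'}" "\<beta>' permutes {1..m'}"
      "hequiv m (delta \<alpha>) (delta \<alpha>')" "hequiv m' (delta \<beta>) (delta \<beta>')" for \<alpha> \<alpha>' \<beta> \<beta>'
    using cprod_hequiv[OF that(5,6)] cprod_delta[OF that(1,3)] cprod_delta[OF that(2,4)] by simp
  show ?thesis
    by (intro conjI allI impI conc_hequiv cprod_hequiv cshift_permutes hequiv_cshift)
qed

end
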